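(* Let $f:\Omega_D\to A$ be a function. If there exists $I\in\mathbb T$ such that \[f(\alpha+\beta J)=\sum_{H\in\mathscr P(\tau)}\gamma_H\,f(\alpha+\overline\beta^H I),\qquad \gamma_H:=2^{-\tau}\sum_{K\in\mathscr P(\tau)}(-1)^{|K\cap H|}J_KI_K^{-1},\] for all $(\alpha,\beta)\in D$ and all $J\in\mathbb T$, then $f$ is a $T$-function.
   Context: $A$ is a finite-dimensional associative real algebra with unit and a $*$-involution $x\mapsto x^c$; $\mathbb S_A=\{x: x+x^c=0, xx^c=1\}\neq\emptyset$. $V\subseteq A$ has a basis $(v_0=1,v_1,\dots,v_N)$, $N\geq1$, with $v_s\in\mathbb S_A$ pairwise anticommuting for $s\ge1$, and $V\subseteq\bigcup_{J\in\mathbb S_A}(\mathbb R+J\mathbb R)$; $A$ carries the Euclidean norm making a completion of this basis orthonormal. $\mathbb R_{\ell,m}=\mathrm{Span}_{\mathbb R}(v_\ell,\dots,v_m)$, $\mathbb S_{\ell,m}$ its unit sphere. $T=(t_0,\dots,t_\tau)$, $0\le t_0<\dots<t_\tau=N$, with torus $\mathbb T=\mathbb S_{t_0+1,t_1}\times\cdots\times\mathbb S_{t_{\tau-1}+1,t_\tau}$ (for $\tau=0$ the single index $J=\emptyset$). For $J\in\mathbb T$, $\beta\in\mathbb R^\tau$: $\beta J=\sum_h\beta_hJ_h$; $\mathscr P(\tau)$ the power set of $\{1,\dots,\tau\}$; $J_\emptyset=1$ and $J_K=J_{k_1}\cdots J_{k_p}$ for $K=\{k_1<\dots<k_p\}$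 (invertible, with inverse $I_K^{-1}$ for $I\in\mathbb T$); $\overline\beta^H$ is $\beta$ with $\beta_h$ replaced by $-\beta_h$ for every $h\in H$, and $\overline\beta^h=\overline\beta^{\{h\}}$. $D\subseteq\mathbb R_{0,t_0}\times\mathbb R^\tau$ is invariant under $(\alpha,\beta)\mapsto(\alpha,\overline\beta^h)$ for every $h$, and $\Omega_D=\{\alpha+\beta J:(\alpha,\beta)\in D,J\in\mathbb T\}$. A $T$-stem function is $F=\sum_{K}E_KF_K:D\to A\otimes\mathbb R^{2^\tau}$ ($E_K$ canonical basis of $\mathbb R^{2^\tau}$) with $F_K(\alpha,\overline\beta^h)=F_K(\alpha,\beta)$ if $h\notin K$ and $=-F_K(\alpha,\beta)$ if $h\in K$. A $T$-function is a function $\Omega_D\to A$ of the form $\alpha+\beta J\mapsto\sum_KJ_KF_K(\alpha,\beta)$ for some $T$-stem function $F$. *)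

theory Defs
  imports "HOL-Analysis.Analysis"
begin

definition star_involution :: "('a::real_algebra_1 \<Rightarrow> 'a) \<Rightarrow> bool" where
  "star_involution cj \<longleftrightarrow> linear cj \<and> (\<forall>x. cj (cj x) = x)
     \<and> (\<forall>x y. cj (x * y) = cj y * cj x) \<and> cj 1 = 1"

definition finite_dim_alg :: "'a::real_algebra_1 itself \<Rightarrow> bool" where
  "finite_dim_alg _ \<longleftrightarrow> (\<exists>B::'a set. finite B \<and> span B = UNIV)"

definition imag_units :: "('a::real_algebra_1 \<Rightarrow> 'a) \<Rightarrow> 'a set" where
  "imag_units cj = {x. x + cj x = 0 \<and> x * cj x = 1}"

definition good_basis :: "('a::real_algebra_1 \<Rightarrow> 'a) \<Rightarrow> (nat \<Rightarrow> 'a) \<Rightarrow> nat \<Rightarrow> bool" where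
  "good_basis cj v N \<longleftrightarrow> 1 \<le> N \<and> inj_on v {0..N} \<and> independent (v ` {0..N}) \<and> v 0 = 1
     \<and> (\<forall>s\<in>{1..N}. v s \<in> imag_units cj)
     \<and> (\<forall>s\<in>{1..N}. \<forall>r\<in>{1..N}. s \<noteq> r \<longrightarrow> v s * v r = - (v r * v s))
     \<and> (\<forall>x\<in>span (v ` {0..N}). \<exists>J\<in>imag_units cj. \<exists>a b. x = of_real a + b *\<^sub>R J)"

definition Rlm :: "(nat \<Rightarrow> 'a::real_algebra_1) \<Rightarrow> nat \<Rightarrow> nat \<Rightarrow> 'a set" where
  "Rlm v l m = span (v ` {l..m})"

definition Slm :: "(nat \<Rightarrow> 'a::real_algebra_1) \<Rightarrow> nat \<Rightarrow> nat \<Rightarrow> 'a set" where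
  "Slm v l m = {(\<Sum>i\<in>{l..m}. x i *\<^sub>R v i) | x. (\<Sum>i\<in>{l..m}. (x i)\<^sup>2) = 1}"

definition good_partition :: "nat \<Rightarrow> (nat \<Rightarrow> nat) \<Rightarrow> nat \<Rightarrow> bool" where
  "good_partition N t \<tau> \<longleftrightarrow> (\<forall>i<\<tau>. t i < t (Suc i)) \<and> t \<tau> = N"

text \<open>The torus: tuples J = (J_1, ..., J_tau), represented as functions nat => 'a vanishing
  outside {1..tau} (for tau = 0 the single element is the empty tuple).\<close>
definition torus :: "(nat \<Rightarrow> 'a::real_algebra_1) \<Rightarrow> (nat \<Rightarrow> nat) \<Rightarrow> nat \<Rightarrow> (nat \<Rightarrow> 'a) set" where
  "torus v t \<tau> = {J. (\<forall>h\<in>{1..\<tau>}. J h \<in> Slm v (t (h - 1) + 1) (t h)) \<and> (\<forall>h. h \<notin> {1..\<tau>} \<longrightarrow> J h = 0)}"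

definition bJ :: "nat \<Rightarrow> (nat \<Rightarrow> real) \<Rightarrow> (nat \<Rightarrow> 'a::real_algebra_1) \<Rightarrow> 'a" where
  "bJ \<tau> \<beta> J = (\<Sum>h\<in>{1..\<tau>}. \<beta> h *\<^sub>R J h)"

definition JK :: "(nat \<Rightarrow> 'a::real_algebra_1) \<Rightarrow> nat set \<Rightarrow> 'a" where
  "JK J K = prod_list (map J (sorted_list_of_set K))"

definition rinv :: "'a::real_algebra_1 \<Rightarrow> 'a" where
  "rinv x = (THE y. x * y = 1 \<and> y * x = 1)"

definition flip :: "nat set \<Rightarrow> (nat \<Rightarrow> real) \<Rightarrow> nat \<Rightarrow> real" where
  "flip H \<beta> = (\<lambda>h. if h \<in> H then - \<beta> h else \<beta> h)"

definition good_domain :: "(nat \<Rightarrow> 'a::real_algebra_1) \<Rightarrow> (nat \<Rightarrow> nat) \<Rightarrow> nat \<Rightarrow> ('a \<times> (nat \<Rightarrow> real)) set \<Rightarrow> bool" where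
  "good_domain v t \<tau> D \<longleftrightarrow>
     (\<forall>(\<alpha>, \<beta>)\<in>D. \<alpha> \<in> Rlm v 0 (t 0) \<and> (\<forall>h. h \<notin> {1..\<tau>} \<longrightarrow> \<beta> h = 0))
     \<and> (\<forall>(\<alpha>, \<beta>)\<in>D. \<forall>h\<in>{1..\<tau>}. (\<alpha>, flip {h} \<beta>) \<in> D)"

definition OmegaD :: "(nat \<Rightarrow> 'a::real_algebra_1) \<Rightarrow> (nat \<Rightarrow> nat) \<Rightarrow> nat \<Rightarrow> ('a \<times> (nat \<Rightarrow> real)) set \<Rightarrow> 'a set" where
  "OmegaD v t \<tau> D = {\<alpha> + bJ \<tau> \<beta> J | \<alpha> \<beta> J. (\<alpha>, \<beta>) \<in> D \<and> J \<in> torus v t \<tau>}"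

definition stem_function :: "nat \<Rightarrow> ('a \<times> (nat \<Rightarrow> real)) set \<Rightarrow> (nat set \<Rightarrow> 'a \<times> (nat \<Rightarrow> real) \<Rightarrow> 'a::real_algebra_1) \<Rightarrow> bool" where
  "stem_function \<tau> D F \<longleftrightarrow>
     (\<forall>K\<in>Pow {1..\<tau>}. \<forall>(\<alpha>, \<beta>)\<in>D. \<forall>h\<in>{1..\<tau>}.
        F K (\<alpha>, flip {h} \<beta>) = (if h \<in> K then - F K (\<alpha>, \<beta>) else F K (\<alpha>, \<beta>)))"

definition T_function :: "(nat \<Rightarrow> 'a::real_algebra_1) \<Rightarrow> (nat \<Rightarrow> nat) \<Rightarrow> nat \<Rightarrow> ('a \<times> (nat \<Rightarrow> real)) set \<Rightarrow> ('a \<Rightarrow> 'a) \<Rightarrow> bool" where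
  "T_function v t \<tau> D f \<longleftrightarrow> (\<exists>F. stem_function \<tau> D F \<and>
     (\<forall>(\<alpha>, \<beta>)\<in>D. \<forall>J\<in>torus v t \<tau>. f (\<alpha> + bJ \<tau> \<beta> J) = (\<Sum>K\<in>Pow {1..\<tau>}. JK J K * F K (\<alpha>, \<beta>))))"

definition gammaH :: "nat \<Rightarrow> (nat \<Rightarrow> 'a::real_algebra_1) \<Rightarrow> (nat \<Rightarrow> 'a) \<Rightarrow> nat set \<Rightarrow> 'a" where
  "gammaH \<tau> J I H = (1 / 2 ^ \<tau>) *\<^sub>R (\<Sum>K\<in>Pow {1..\<tau>}. ((-1) ^ card (K \<inter> H)) *\<^sub>R (JK J K * rinv (JK I K)))"

end

theory Submission
  imports Defs
begin

text \<open>Expanding \<open>\<gamma>\<^sub>H\<close> and exchanging the two sums writes \<open>f(\<alpha> + \<beta>J)\<close> as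
  \<open>\<Sum>\<^sub>K J\<^sub>K F\<^sub>K(\<alpha>,\<beta>)\<close>, where \<open>F\<^sub>K\<close> is the \<open>K\<close>-th Walsh--Hadamard coefficient of
  \<open>H \<mapsto> I\<^sub>K\<^sup>-\<^sup>1 f(\<alpha> + \<beta>\<^sup>HI)\<close>. Flipping the sign of \<open>\<beta>\<^sub>h\<close> permutes the sample points
  by \<open>H \<mapsto> H \<triangle> {h}\<close>, which changes the sign \<open>(-1)\<^bsup>|K \<inter> H|\<^esup>\<close> exactly when \<open>h \<in> K\<close>;
  hence \<open>F\<close> is a \<open>T\<close>-stem function. The argument is purely combinatorial: none of the
  standing hypotheses on \<open>A\<close>, \<open>V\<close>, \<open>T\<close> and \<open>D\<close> is used, and \<open>I\<^sub>K\<^sup>-\<^sup>1\<close> need not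
  be a genuine inverse.\<close>

definition toggle :: "'a \<Rightarrow> 'a set \<Rightarrow> 'a set" where
  "toggle h H = (if h \<in> H then H - {h} else insert h H)"

lemma toggle_toggle [simp]: "toggle h (toggle h H) = H"
  by (auto simp: toggle_def)

lemma toggle_subset: "h \<in> S \<Longrightarrow> H \<subseteq> S \<Longrightarrow> toggle h H \<subseteq> S"
  by (auto simp: toggle_def)

lemma flip_flip_singleton: "flip H (flip {h} \<beta>) = flip (toggle h H) \<beta>"
  by (auto simp: flip_def toggle_def fun_eq_iff)

lemma minus_one_power_card_Int_toggle:
  assumes "finite K"
  shows "(-1::real) ^ card (K \<inter> toggle h H)
      = (if h \<in> K then - ((-1) ^ card (K \<inter> H)) else (-1) ^ card (K \<inter> H))"
proof (cases "h \<in> K")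
  case False
  then have "K \<inter> toggle h H = K \<inter> H"
    by (auto simp: toggle_def)
  with False show ?thesis by simp
next
  case True
  show ?thesis
  proof (cases "h \<in> H")
    case True
    then have "K \<inter> toggle h H = K \<inter> H - {h}"
      by (auto simp: toggle_def)
    with \<open>h \<in> H\<close> \<open>h \<in> K\<close> have "card (K \<inter> H) = Suc (card (K \<inter> toggle h H))"
      using assms by (metis IntI card_Suc_Diff1 finite_Int)
    with \<open>h \<in> K\<close> show ?thesis by simp
  next
    case False
    with \<open>h \<in> K\<close> have "K \<inter> toggle h H = insert h (K \<inter> H)"
      by (auto simp: toggle_def)
    with False assms \<open>h \<in> K\<close> show ?thesis by simp
  qed
qed

lemma walsh_sum_toggle:
  fixes g :: "'a set \<Rightarrow> 'b::real_vector"
  assumes "h \<in> S" and "finite K"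
  shows "(\<Sum>H\<in>Pow S. (-1::real) ^ card (K \<inter> H) *\<^sub>R g (toggle h H))
       = (if h \<in> K then - (\<Sum>H\<in>Pow S. (-1) ^ card (K \<inter> H) *\<^sub>R g H)
          else (\<Sum>H\<in>Pow S. (-1) ^ card (K \<inter> H) *\<^sub>R g H))"
proof -
  have "(\<Sum>H\<in>Pow S. (-1::real) ^ card (K \<inter> H) *\<^sub>R g (toggle h H))
      = (\<Sum>H\<in>Pow S. (-1::real) ^ card (K \<inter> toggle h H) *\<^sub>R g H)"
    by (rule sum.reindex_bij_witness[where i = "toggle h" and j = "toggle h"])
       (simp_all add: toggle_subset assms(1))
  then show ?thesis
    by (simp add: minus_one_power_card_Int_toggle[OF assms(2)] sum_negf)
qed

definition slice_stem ::
    "nat \<Rightarrow> (nat \<Rightarrow> 'a::real_algebra_1) \<Rightarrow> ('a \<Rightarrow> 'a) \<Rightarrow> nat set \<Rightarrow> 'a \<times> (nat \<Rightarrow> real) \<Rightarrow> 'a" where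
  "slice_stem \<tau> I f K p = (1 / 2 ^ \<tau>) *\<^sub>R
     (\<Sum>H\<in>Pow {1..\<tau>}. (-1::real) ^ card (K \<inter> H) *\<^sub>R (rinv (JK I K) * f (fst p + bJ \<tau> (flip H (snd p)) I)))"

lemma slice_stem_flip:
  assumes "K \<in> Pow {1..\<tau>}" and "h \<in> {1..\<tau>}"
  shows "slice_stem \<tau> I f K (\<alpha>, flip {h} \<beta>)
       = (if h \<in> K then - slice_stem \<tau> I f K (\<alpha>, \<beta>) else slice_stem \<tau> I f K (\<alpha>, \<beta>))"
proof -
  have "finite K"
    using assms(1) finite_subset by auto
  from walsh_sum_toggle[OF assms(2) this,
      of "\<lambda>H. rinv (JK I K) * f (\<alpha> + bJ \<tau> (flip H \<beta>) I)"]
  show ?thesis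
    by (simp add: slice_stem_def flip_flip_singleton)
qed

lemma stem_function_slice_stem: "stem_function \<tau> D (slice_stem \<tau> I f)"
  by (auto simp: stem_function_def slice_stem_flip)

lemma sum_gammaH_mult:
  "(\<Sum>H\<in>Pow {1..\<tau>}. gammaH \<tau> J I H * y H)
   = (\<Sum>K\<in>Pow {1..\<tau>}. JK J K * ((1 / 2 ^ \<tau>) *\<^sub>R
        (\<Sum>H\<in>Pow {1..\<tau>}. (-1::real) ^ card (K \<inter> H) *\<^sub>R (rinv (JK I K) * y H))))"
proof -
  have "(\<Sum>H\<in>Pow {1..\<tau>}. gammaH \<tau> J I H * y H)
      = (\<Sum>H\<in>Pow {1..\<tau>}. \<Sum>K\<in>Pow {1..\<tau>}.
           JK J K * ((1 / 2 ^ \<tau>) *\<^sub>R ((-1::real) ^ card (K \<inter> H) *\<^sub>R (rinv (JK I K) * y H))))"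
    by (simp add: gammaH_def scaleR_sum_right sum_distrib_right mult.assoc)
  also have "\<dots> = (\<Sum>K\<in>Pow {1..\<tau>}. \<Sum>H\<in>Pow {1..\<tau>}.
           JK J K * ((1 / 2 ^ \<tau>) *\<^sub>R ((-1::real) ^ card (K \<inter> H) *\<^sub>R (rinv (JK I K) * y H))))"
    by (rule sum.swap)
  finally show ?thesis
    by (simp add: scaleR_sum_right sum_distrib_left)
qed

theorem proposition2p35:
  fixes cj :: "'a::real_algebra_1 \<Rightarrow> 'a" and v :: "nat \<Rightarrow> 'a" and N :: nat
    and t :: "nat \<Rightarrow> nat" and \<tau> :: nat and D :: "('a \<times> (nat \<Rightarrow> real)) set"
    and f :: "'a \<Rightarrow> 'a"
  assumes "finite_dim_alg TYPE('a)"
    and "star_involution cj"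
    and "imag_units cj \<noteq> {}"
    and "good_basis cj v N"
    and "good_partition N t \<tau>"
    and "good_domain v t \<tau> D"
    and "\<exists>I\<in>torus v t \<tau>. \<forall>(\<alpha>, \<beta>)\<in>D. \<forall>J\<in>torus v t \<tau>.
           f (\<alpha> + bJ \<tau> \<beta> J) = (\<Sum>H\<in>Pow {1..\<tau>}. gammaH \<tau> J I H * f (\<alpha> + bJ \<tau> (flip H \<beta>) I))"
  shows "T_function v t \<tau> D f"
proof -
  from assms(7) obtain I where representation:
    "\<forall>(\<alpha>, \<beta>)\<in>D. \<forall>J\<in>torus v t \<tau>.
       f (\<alpha> + bJ \<tau> \<beta> J) = (\<Sum>H\<in>Pow {1..\<tau>}. gammaH \<tau> J I H * f (\<alpha> + bJ \<tau> (flip H \<beta>) I))"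
    by blast
  have "f (\<alpha> + bJ \<tau> \<beta> J) = (\<Sum>K\<in>Pow {1..\<tau>}. JK J K * slice_stem \<tau> I f K (\<alpha>, \<beta>))"
    if "(\<alpha>, \<beta>) \<in> D" and "J \<in> torus v t \<tau>" for \<alpha> \<beta> J
  proof -
    have "f (\<alpha> + bJ \<tau> \<beta> J) = (\<Sum>H\<in>Pow {1..\<tau>}. gammaH \<tau> J I H * f (\<alpha> + bJ \<tau> (flip H \<beta>) I))"
      using representation that by blast
    then show ?thesis
      by (simp only: sum_gammaH_mult slice_stem_def fst_conv snd_conv)
  qed
  with stem_function_slice_stem show ?thesis
    unfolding T_function_def by blast
qed

end
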